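(* Let $N=2$, $n\ge1$, $\rho\in\{0,1\}$, with homogeneous nonzero parameters $a,b,c,d,\kappa$ and $a^nc^n+(-1)^\rho\kappa^n\ne0$. Let $t(\lambda)$ be a polynomial of degree $\le n$ with $t(0)=1+(-1)^\rho b^nd^n/\kappa^n$ and leading coefficient (of $\lambda^n$) $a^nc^n+(-1)^\rho\kappa^n$, satisfying $$t(\lambda)t(-\lambda)=(-1)^\rho\big(z(\lambda)+z(-\lambda)\big)+\operatorname{tr}\big(\mathcal L(\lambda^2)^n\big),$$ where $z(\lambda)=\big((b+a\kappa\lambda)(d-c\kappa\lambda)/\kappa\big)^n$ and $\mathcal L(\Lambda)=\begin{pmatrix}1-\kappa^2\Lambda&-\Lambda(a^2-b^2)\\ c^2-d^2&b^2d^2/\kappa^2-\Lambda a^2c^2\end{pmatrix}$. Then $$t(\lambda)t(-\lambda)=(-1)^n\prod_{q}\big(A(q)\lambda^2-C(q)+2iB(q)\lambda\big),$$ and, assuming all $A(q)\ne0$, $$t(\lambda)=\big(a^nc^n+(-1)^\rho\kappa^n\big)\prod_q(\lambda+\sigma_q\lambda_q)$$ for some signs $\sigma_q\in\{\pm1\}$ with $\prod_q\sigma_q=(-1)^\rho$ (i.e. the number of minus signs is even for $\rho=0$ and odd for $\rho=1$). Here $q$ runs over $\{\pi(2s+1-\rho)/n: s=0,\dots,n-1\}$.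
   Context: $A(q)=a^2c^2-2\kappa ac\cos q+\kappa^2$, $B(q)=(ad-bc)\sin q$, $C(q)=1-2\frac{bd}{\kappa}\cos q+\frac{b^2d^2}{\kappa^2}$, $D(q)=A(q)C(q)-B(q)^2$, and $\lambda_q=(\sqrt{D(q)}-iB(q))/A(q)$, where the square roots are chosen so that $\sqrt{D(q)}=\sqrt{D(-q)}$ for $q\not\equiv0,\pi\pmod{2\pi}$, $\sqrt{D(0)}=(\kappa-ac)(1-bd/\kappa)$ and $\sqrt{D(\pi)}=(\kappa+ac)(1+bd/\kappa)$. (Angles are taken modulo $2\pi$.) *)

theory Defs
  imports Complex_Main "HOL-Computational_Algebra.Polynomial" "Jordan_Normal_Form.Matrix"
begin

definition mat_trace :: "'a::comm_ring_1 mat \<Rightarrow> 'a" where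
  "mat_trace M = (\<Sum>i<dim_row M. M $$ (i,i))"

definition Afun :: "complex \<Rightarrow> complex \<Rightarrow> complex \<Rightarrow> complex \<Rightarrow> complex \<Rightarrow> real \<Rightarrow> complex" where
  "Afun a b c d \<kappa> q = a^2 * c^2 - 2 * \<kappa> * a * c * of_real (cos q) + \<kappa>^2"

definition Bfun :: "complex \<Rightarrow> complex \<Rightarrow> complex \<Rightarrow> complex \<Rightarrow> complex \<Rightarrow> real \<Rightarrow> complex" where
  "Bfun a b c d \<kappa> q = (a * d - b * c) * of_real (sin q)"

definition Cfun :: "complex \<Rightarrow> complex \<Rightarrow> complex \<Rightarrow> complex \<Rightarrow> complex \<Rightarrow> real \<Rightarrow> complex" where
  "Cfun a b c d \<kappa> q = 1 - 2 * (b * d / \<kappa>) * of_real (cos q) + b^2 * d^2 / \<kappa>^2"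

definition Dfun :: "complex \<Rightarrow> complex \<Rightarrow> complex \<Rightarrow> complex \<Rightarrow> complex \<Rightarrow> real \<Rightarrow> complex" where
  "Dfun a b c d \<kappa> q = Afun a b c d \<kappa> q * Cfun a b c d \<kappa> q - (Bfun a b c d \<kappa> q)^2"

definition admissible_sqrtD :: "complex \<Rightarrow> complex \<Rightarrow> complex \<Rightarrow> complex \<Rightarrow> complex \<Rightarrow> (real \<Rightarrow> complex) \<Rightarrow> bool" where
  "admissible_sqrtD a b c d \<kappa> sD \<longleftrightarrow>
     (\<forall>q. (sD q)^2 = Dfun a b c d \<kappa> q) \<and>
     (\<forall>q. sD (q + 2 * pi) = sD q) \<and>
     (\<forall>q. sin q \<noteq> 0 \<longrightarrow> sD (- q) = sD q) \<and>
     sD 0 = (\<kappa> - a * c) * (1 - b * d / \<kappa>) \<and>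
     sD pi = (\<kappa> + a * c) * (1 + b * d / \<kappa>)"

definition lam :: "complex \<Rightarrow> complex \<Rightarrow> complex \<Rightarrow> complex \<Rightarrow> complex \<Rightarrow> (real \<Rightarrow> complex) \<Rightarrow> real \<Rightarrow> complex" where
  "lam a b c d \<kappa> sD q = (sD q - \<i> * Bfun a b c d \<kappa> q) / Afun a b c d \<kappa> q"

definition zfun :: "complex \<Rightarrow> complex \<Rightarrow> complex \<Rightarrow> complex \<Rightarrow> complex \<Rightarrow> nat \<Rightarrow> complex \<Rightarrow> complex" where
  "zfun a b c d \<kappa> n x = ((b + a * \<kappa> * x) * (d - c * \<kappa> * x) / \<kappa>) ^ n"

definition Lmat :: "complex \<Rightarrow> complex \<Rightarrow> complex \<Rightarrow> complex \<Rightarrow> complex \<Rightarrow> complex \<Rightarrow> complex mat" where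
  "Lmat a b c d \<kappa> \<Lambda> = mat_of_rows_list 2
     [[1 - \<kappa>^2 * \<Lambda>, - \<Lambda> * (a^2 - b^2)],
      [c^2 - d^2, b^2 * d^2 / \<kappa>^2 - \<Lambda> * a^2 * c^2]]"

definition qang :: "nat \<Rightarrow> nat \<Rightarrow> nat \<Rightarrow> real" where
  "qang n \<rho> s = pi * (2 * real s + 1 - real \<rho>) / real n"

end

theory Submission
  imports Defs
begin

(*
  Put w = cis q.  Then w * (A(q) x^2 - C(q) + 2 i B(q) x) is a quadratic alpha w^2 + beta w + gamma
  whose coefficients do not depend on q; alpha^n and gamma^n are z(x) and z(-x), and if
  alpha w^2 + beta w + gamma = (p1 w + p2) (p3 w + p4), the eigenvalues of L(x^2) are -p1 p4 and
  -p2 p3.  The numbers cis q_s are exactly the n-th roots of -(-1)^rho, so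
  prod_s (X - cis q_s Y) = X^n + (-1)^rho Y^n, and the product over s collapses to
  (-1)^rho (z(x) + z(-x)) + tr L(x^2)^n.

  For the factorisation, A(q) x^2 - C(q) + 2 i B(q) x = A(q) (x - lambda_q) (x + lambda_{-q}), and
  q -> -q permutes the angles, so t(x) t(-x) is a constant times prod_q (x - lambda_q) (x + lambda_q);
  peeling off one root at a time shows t = const * prod_q (x + sigma_q lambda_q).  The sign of
  prod_q sigma_q is read off from t(0).  With g(q) = (1 - cis q bd/kappa) / (kappa - cis q ac) we have
  lambda_q lambda_{-q} = C(q)/A(q) = g(q) g(-q), and lambda_q = g(q) at the self-paired angles 0 and
  pi by the prescribed values of sqrt D there; hence
  prod_q lambda_q = prod_q g(q) = (1 + (-1)^rho (bd/kappa)^n) / (kappa^n + (-1)^rho (ac)^n).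
  When this vanishes some lambda_q is 0, and its sign can be flipped freely.
*)

lemma mat_trace_cayley_hamilton_2x2:
  fixes X :: "'a::comm_ring_1 mat" and p q r s :: 'a
  assumes X: "X \<in> carrier_mat 2 2"
  defines "M \<equiv> mat_of_rows_list 2 [[p, q], [r, s]]"
  shows "mat_trace (X * M * M) = (p + s) * mat_trace (X * M) - (p * s - q * r) * mat_trace X"
proof -
  have M: "M \<in> carrier_mat 2 2" unfolding M_def mat_of_rows_list_def by auto
  have entries: "M $$ (0, 0) = p" "M $$ (0, 1) = q" "M $$ (1, 0) = r" "M $$ (1, 1) = s"
    unfolding M_def mat_of_rows_list_def by auto
  show ?thesis
    using X M unfolding mat_trace_def
    by (simp add: scalar_prod_def numeral_2_eq_2 lessThan_Suc atLeast0LessThan entries[simplified]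
        row_def col_def algebra_simps)
qed

lemma mat_trace_power_2x2:
  fixes p q r s y1 y2 :: "'a::comm_ring_1"
  assumes sum: "y1 + y2 = p + s" and prod: "y1 * y2 = p * s - q * r"
  shows "mat_trace (mat_of_rows_list 2 [[p, q], [r, s]] ^\<^sub>m k) = y1 ^ k + y2 ^ k"
proof -
  define M where "M = mat_of_rows_list 2 [[p, q], [r, s]]"
  have M: "M \<in> carrier_mat 2 2" unfolding M_def mat_of_rows_list_def by auto
  have "mat_trace (M ^\<^sub>m k) = y1 ^ k + y2 ^ k \<and>
        mat_trace (M ^\<^sub>m Suc k) = y1 ^ Suc k + y2 ^ Suc k"
  proof (induction k)
    case 0
    have "mat_trace (M ^\<^sub>m 0) = 2" using M
      by (simp add: mat_trace_def numeral_2_eq_2 lessThan_Suc)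
    moreover have "mat_trace (M ^\<^sub>m 1) = p + s" using M
      by (simp add: mat_trace_def numeral_2_eq_2 lessThan_Suc M_def mat_of_rows_list_def)
    ultimately show ?case using sum by simp
  next
    case (Suc k)
    have "mat_trace (M ^\<^sub>m Suc (Suc k)) = mat_trace (M ^\<^sub>m k * M * M)" by simp
    also have "\<dots> = (p + s) * mat_trace (M ^\<^sub>m k * M) - (p * s - q * r) * mat_trace (M ^\<^sub>m k)"
      using mat_trace_cayley_hamilton_2x2[of "M ^\<^sub>m k"] M unfolding M_def by simp
    also have "\<dots> = (y1 + y2) * (y1 ^ Suc k + y2 ^ Suc k) - y1 * y2 * (y1 ^ k + y2 ^ k)"
      using Suc sum prod by simp
    also have "\<dots> = y1 ^ Suc (Suc k) + y2 ^ Suc (Suc k)" by (simp add: algebra_simps)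
    finally show ?case using Suc by simp
  qed
  then show ?thesis unfolding M_def by simp
qed

lemma complex_quadratic_splits:
  fixes \<alpha> \<beta> \<gamma> :: complex
  obtains p1 p2 p3 p4 where "p1 * p3 = \<alpha>" "p1 * p4 + p2 * p3 = \<beta>" "p2 * p4 = \<gamma>"
proof (cases "\<alpha> = 0")
  case True
  have "\<beta> * 0 = \<alpha>" "\<beta> * 1 + \<gamma> * 0 = \<beta>" "\<gamma> * 1 = \<gamma>" using True by simp_all
  then show ?thesis by (rule that)
next
  case False
  define w where "w = csqrt (\<beta>\<^sup>2 - 4 * \<alpha> * \<gamma>)"
  have p13: "\<alpha> * 1 = \<alpha>" by simp
  have p14_23: "\<alpha> * ((\<beta> - w) / (2 * \<alpha>)) + (\<beta> + w) / 2 * 1 = \<beta>"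
    using False by (simp add: field_simps)
  have "(\<beta> + w) / 2 * ((\<beta> - w) / (2 * \<alpha>)) = (\<beta>\<^sup>2 - w\<^sup>2) / (4 * \<alpha>)"
    by (simp add: field_simps power2_eq_square)
  also have "\<dots> = \<gamma>" using False by (simp add: w_def)
  finally show ?thesis by (rule that[OF p13 p14_23])
qed

lemma prod_sub_distinct_roots:
  fixes \<omega> :: "nat \<Rightarrow> 'a::idom"
  assumes n: "n \<ge> 1" and inj: "inj_on \<omega> {..<n}" and roots: "\<And>s. s < n \<Longrightarrow> \<omega> s ^ n = e"
  shows "(\<Prod>s<n. z - \<omega> s) = z ^ n - e"
proof -
  define P where "P = (\<Prod>s<n. [:- \<omega> s, 1:])"
  define Q where "Q = monom 1 n - [:e:]"
  have deg_P: "degree P = n" unfolding P_def by (subst degree_prod_sum_eq) auto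
  have lead_P: "lead_coeff P = 1" unfolding P_def by (simp add: lead_coeff_prod)
  have "P = Q"
  proof (rule poly_eqI_degree_lead_coeff[of P n Q "\<omega> ` {..<n}"])
    show "coeff P n = coeff Q n"
      using deg_P lead_P n unfolding Q_def by (cases n) auto
    show "n \<le> card (\<omega> ` {..<n})" using inj by (simp add: card_image)
    show "degree Q \<le> n" unfolding Q_def by (intro degree_diff_le degree_monom_le) simp
    fix z assume "z \<in> \<omega> ` {..<n}"
    then obtain s where "s < n" "z = \<omega> s" by auto
    then show "poly P z = poly Q z"
      using roots unfolding P_def Q_def poly_prod by (auto simp: poly_monom intro!: prod_zero)
  qed (use deg_P in simp)
  then have "poly P z = poly Q z" by simp
  then show ?thesis unfolding P_def Q_def poly_prod by (simp add: poly_monom)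
qed

lemma prod_sub_distinct_roots_homogeneous:
  fixes \<omega> :: "nat \<Rightarrow> 'a::field"
  assumes n: "n \<ge> 1" and "inj_on \<omega> {..<n}" and "\<And>s. s < n \<Longrightarrow> \<omega> s ^ n = e"
  shows "(\<Prod>s<n. X - \<omega> s * Y) = X ^ n - e * Y ^ n"
proof (cases "Y = 0")
  case True
  then show ?thesis using n by simp
next
  case False
  have "(\<Prod>s<n. X - \<omega> s * Y) = (\<Prod>s<n. Y * (X / Y - \<omega> s))"
    using False by (intro prod.cong) (auto simp: field_simps)
  also have "\<dots> = Y ^ n * ((X / Y) ^ n - e)"
    using prod_sub_distinct_roots[OF assms] by (simp add: prod.distrib)
  also have "\<dots> = X ^ n - e * Y ^ n" using False by (simp add: field_simps)
  finally show ?thesis .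
qed

lemma qang_bounds:
  assumes "s < n" and "\<rho> \<in> {0, 1}"
  shows "0 \<le> qang n \<rho> s" and "qang n \<rho> s < 2 * pi"
proof -
  define u where "u = 2 * real s + 1 - real \<rho>"
  have "0 \<le> u" "u < 2 * real n" using assms by (auto simp: u_def)
  then have "0 \<le> pi * u / real n" "pi * u / real n < 2 * pi"
    using assms(1) by (simp_all add: field_simps)
  then show "0 \<le> qang n \<rho> s" "qang n \<rho> s < 2 * pi" by (simp_all add: qang_def u_def)
qed

lemma qang_inject:
  assumes "n \<ge> 1" and "qang n \<rho> s = qang n \<rho> t"
  shows "s = t"
  using assms unfolding qang_def by (simp add: field_simps)

lemma cis_eq_cis_0_2pi:
  assumes "0 \<le> x" "x < 2 * pi" "0 \<le> y" "y < 2 * pi" and "cis x = cis y"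
  shows "x = y"
proof -
  have "sin x = sin y" "cos x = cos y"
    using arg_cong[OF assms(5), of Im] arg_cong[OF assms(5), of Re] by simp_all
  then obtain m :: int where m: "x = y + 2 * pi * m"
    using sin_cos_eq_iff by blast
  have "\<bar>2 * pi * m\<bar> < 2 * pi" using m assms(1-4) by (simp only: abs_less_iff) linarith
  then have "\<bar>m\<bar> < 1" by (simp add: abs_mult)
  then show ?thesis using m by simp
qed

lemma sin_eq_0_0_2pi:
  assumes "0 \<le> x" "x < 2 * pi" "sin x = 0"
  shows "x = 0 \<or> x = pi"
proof -
  obtain i :: int where i: "x = of_int i * pi" using assms(3) sin_zero_iff_int2 by blast
  with assms(1,2) have "0 \<le> of_int i * pi" "of_int i * pi < 2 * pi" by simp_all
  then have "0 \<le> i" "i < 2" using pi_gt_zero by (auto simp: zero_le_mult_iff)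
  then have "i = 0 \<or> i = 1" by auto
  then show ?thesis using i by auto
qed

lemma cis_qang_power:
  assumes "n \<ge> 1" and "\<rho> \<in> {0, 1}"
  shows "cis (qang n \<rho> s) ^ n = - ((-1) ^ \<rho>)"
proof -
  have "cis (qang n \<rho> s) ^ n = cis (pi * (2 * real s + 1 - real \<rho>))"
    using assms(1) unfolding DeMoivre qang_def by simp
  also have "\<dots> = cis (2 * pi * real s) * cis (pi * (1 - real \<rho>))"
    by (simp add: cis_mult algebra_simps)
  also have "\<dots> = - ((-1) ^ \<rho>)"
    using assms(2) by auto
  finally show ?thesis .
qed

lemma inj_on_cis_qang:
  assumes "n \<ge> 1" and "\<rho> \<in> {0, 1}"
  shows "inj_on (\<lambda>s. cis (qang n \<rho> s)) {..<n}"
proof (rule inj_onI)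
  fix s t assume "s \<in> {..<n}" "t \<in> {..<n}" "cis (qang n \<rho> s) = cis (qang n \<rho> t)"
  then have "qang n \<rho> s = qang n \<rho> t"
    using qang_bounds[of _ n \<rho>] assms(2) by (intro cis_eq_cis_0_2pi) auto
  then show "s = t" using assms(1) by (rule qang_inject[rotated])
qed

lemma prod_sub_cis_qang:
  assumes "n \<ge> 1" and "\<rho> \<in> {0, 1}"
  shows "(\<Prod>s<n. X - cis (qang n \<rho> s) * Y) = X ^ n + (-1) ^ \<rho> * Y ^ n"
  using prod_sub_distinct_roots_homogeneous[OF assms(1) inj_on_cis_qang[OF assms] cis_qang_power[OF assms]]
  by simp

lemma of_real_cos_cis: "complex_of_real (cos q) = (cis q + inverse (cis q)) / 2"
  by (simp add: complex_eq_iff)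

lemma of_real_sin_cis: "complex_of_real (sin q) = (cis q - inverse (cis q)) / (2 * \<i>)"
proof -
  have "cis q - inverse (cis q) = 2 * \<i> * complex_of_real (sin q)" by (simp add: complex_eq_iff)
  then show ?thesis by simp
qed

lemma cis_mult_factor_eq_quadratic:
  assumes "\<kappa> \<noteq> 0"
  shows "cis q * (Afun a b c d \<kappa> q * x\<^sup>2 - Cfun a b c d \<kappa> q + 2 * \<i> * Bfun a b c d \<kappa> q * x)
    = (b * d / \<kappa> + (a * d - b * c) * x - \<kappa> * a * c * x\<^sup>2) * cis q ^ 2
      + ((\<kappa>\<^sup>2 + a\<^sup>2 * c\<^sup>2) * x\<^sup>2 - 1 - (b * d / \<kappa>)\<^sup>2) * cis q
      + (b * d / \<kappa> - (a * d - b * c) * x - \<kappa> * a * c * x\<^sup>2)"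
  unfolding Afun_def Bfun_def Cfun_def of_real_cos_cis of_real_sin_cis using assms
  by (simp add: field_simps power2_eq_square)

lemma prod_qang_split_quadratic:
  fixes F :: "nat \<Rightarrow> complex"
  assumes n: "n \<ge> 1" and rho: "\<rho> \<in> {0, 1}"
    and split: "\<And>s. cis (qang n \<rho> s) * F s
      = (p2 + cis (qang n \<rho> s) * p1) * (p4 + cis (qang n \<rho> s) * p3)"
  shows "(-1) ^ n * (\<Prod>s<n. F s)
    = (-1) ^ \<rho> * ((p1 * p3) ^ n + (p2 * p4) ^ n) + ((- p1 * p4) ^ n + (- p2 * p3) ^ n)"
proof -
  define \<epsilon> :: complex where "\<epsilon> = (-1) ^ \<rho>"
  have \<epsilon>2: "\<epsilon> * \<epsilon> = 1" unfolding \<epsilon>_def by (simp add: power_add[symmetric])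
  have prod_cis: "(\<Prod>s<n. cis (qang n \<rho> s)) = \<epsilon> * (-1) ^ n"
    using prod_sub_cis_qang[OF n rho, of 0 "-1"] n by (simp add: \<epsilon>_def)
  have prod_linear: "(\<Prod>s<n. p + cis (qang n \<rho> s) * p') = p ^ n + \<epsilon> * (- p') ^ n" for p p'
    using prod_sub_cis_qang[OF n rho, of p "- p'"] by (simp add: \<epsilon>_def)
  have "\<epsilon> * (-1) ^ n * (\<Prod>s<n. F s) = (\<Prod>s<n. cis (qang n \<rho> s) * F s)"
    by (simp add: prod.distrib prod_cis)
  also have "\<dots> = (p2 ^ n + \<epsilon> * (- p1) ^ n) * (p4 ^ n + \<epsilon> * (- p3) ^ n)"
    by (simp add: split prod.distrib prod_linear)
  also have "\<dots> = (p2 * p4) ^ n + \<epsilon> * ((p2 * - p3) ^ n + (- p1 * p4) ^ n) + (\<epsilon> * \<epsilon>) * (- p1 * - p3) ^ n"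
    by (simp only: power_mult_distrib) (simp add: algebra_simps)
  finally have "\<epsilon> * (-1) ^ n * (\<Prod>s<n. F s)
      = (p1 * p3) ^ n + (p2 * p4) ^ n + \<epsilon> * ((- p1 * p4) ^ n + (- p2 * p3) ^ n)"
    using \<epsilon>2 by (simp add: algebra_simps)
  then have "\<epsilon> * (\<epsilon> * (-1) ^ n * (\<Prod>s<n. F s))
      = \<epsilon> * ((p1 * p3) ^ n + (p2 * p4) ^ n) + (\<epsilon> * \<epsilon>) * ((- p1 * p4) ^ n + (- p2 * p3) ^ n)"
    by (simp add: algebra_simps)
  then show ?thesis unfolding \<epsilon>2 mult.assoc[symmetric] \<epsilon>_def[symmetric] by simp
qed

lemma z_sum_plus_trace_eq_prod:
  fixes a b c d \<kappa> x :: complex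
  assumes n: "n \<ge> 1" and rho: "\<rho> \<in> {0, 1}" and \<kappa>: "\<kappa> \<noteq> 0"
  shows "(-1) ^ \<rho> * (zfun a b c d \<kappa> n x + zfun a b c d \<kappa> n (- x))
           + mat_trace ((Lmat a b c d \<kappa> (x\<^sup>2)) ^\<^sub>m n)
         = (-1) ^ n * (\<Prod>s<n. Afun a b c d \<kappa> (qang n \<rho> s) * x\<^sup>2 - Cfun a b c d \<kappa> (qang n \<rho> s)
                               + 2 * \<i> * Bfun a b c d \<kappa> (qang n \<rho> s) * x)"
proof -
  define \<alpha> where "\<alpha> = b * d / \<kappa> + (a * d - b * c) * x - \<kappa> * a * c * x\<^sup>2"
  define \<beta> where "\<beta> = (\<kappa>\<^sup>2 + a\<^sup>2 * c\<^sup>2) * x\<^sup>2 - 1 - (b * d / \<kappa>)\<^sup>2"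
  define \<gamma> where "\<gamma> = b * d / \<kappa> - (a * d - b * c) * x - \<kappa> * a * c * x\<^sup>2"
  obtain p1 p2 p3 p4 where p: "p1 * p3 = \<alpha>" "p1 * p4 + p2 * p3 = \<beta>" "p2 * p4 = \<gamma>"
    by (rule complex_quadratic_splits)
  have "cis q * (Afun a b c d \<kappa> q * x\<^sup>2 - Cfun a b c d \<kappa> q + 2 * \<i> * Bfun a b c d \<kappa> q * x)
      = (p2 + cis q * p1) * (p4 + cis q * p3)" for q
    unfolding cis_mult_factor_eq_quadratic[OF \<kappa>] \<alpha>_def[symmetric] \<beta>_def[symmetric] \<gamma>_def[symmetric]
      p[symmetric] by (simp add: algebra_simps power2_eq_square)
  from prod_qang_split_quadratic[OF n rho this]
  have prod: "(-1) ^ n * (\<Prod>s<n. Afun a b c d \<kappa> (qang n \<rho> s) * x\<^sup>2 - Cfun a b c d \<kappa> (qang n \<rho> s)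
                               + 2 * \<i> * Bfun a b c d \<kappa> (qang n \<rho> s) * x)
      = (-1) ^ \<rho> * (\<alpha> ^ n + \<gamma> ^ n) + ((- p1 * p4) ^ n + (- p2 * p3) ^ n)"
    unfolding p .
  have z: "zfun a b c d \<kappa> n x = \<alpha> ^ n" "zfun a b c d \<kappa> n (- x) = \<gamma> ^ n"
    unfolding zfun_def \<alpha>_def \<gamma>_def using \<kappa> by (simp_all add: field_simps power2_eq_square)
  have "- p1 * p4 + - p2 * p3 = - \<beta>" "- p1 * p4 * (- p2 * p3) = \<alpha> * \<gamma>"
    unfolding p[symmetric] by (simp_all add: algebra_simps)
  then have "mat_trace ((Lmat a b c d \<kappa> (x\<^sup>2)) ^\<^sub>m n) = (- p1 * p4) ^ n + (- p2 * p3) ^ n"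
    unfolding Lmat_def \<alpha>_def \<beta>_def \<gamma>_def using \<kappa>
    by (intro mat_trace_power_2x2) (simp_all add: field_simps power2_eq_square)
  then show ?thesis unfolding prod z by simp
qed

lemma prod_involution_eq:
  fixes f g :: "'a \<Rightarrow> 'b::comm_monoid_mult"
  assumes "finite S"
    and into: "\<And>s. s \<in> S \<Longrightarrow> \<iota> s \<in> S" and invol: "\<And>s. s \<in> S \<Longrightarrow> \<iota> (\<iota> s) = s"
    and pair: "\<And>s. s \<in> S \<Longrightarrow> \<iota> s \<noteq> s \<Longrightarrow> f s * f (\<iota> s) = g s * g (\<iota> s)"
    and fixed: "\<And>s. s \<in> S \<Longrightarrow> \<iota> s = s \<Longrightarrow> f s = g s"
  shows "prod f S = prod g S"
proof -
  have "finite T \<Longrightarrow> T \<subseteq> S \<Longrightarrow> (\<forall>t\<in>T. \<iota> t \<in> T) \<Longrightarrow> prod f T = prod g T" for T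
  proof (induction T rule: finite_psubset_induct)
    case (psubset T)
    show ?case
    proof (cases "T = {}")
      case False
      then obtain s where s: "s \<in> T" by blast
      define orbit where "orbit = {s, \<iota> s}"
      have orbit_T: "orbit \<subseteq> T" using s psubset.prems(2) by (auto simp: orbit_def)
      have "\<iota> t \<in> T - orbit" if "t \<in> T - orbit" for t
        using that psubset.prems s invol[of t] invol[of s] by (auto simp: orbit_def) (metis subsetD)+
      then have rest: "prod f (T - orbit) = prod g (T - orbit)"
        using psubset.prems s by (intro psubset.IH) (auto simp: orbit_def)
      have "prod f orbit = prod g orbit"
        using s psubset.prems(1) pair[of s] fixed[of s] by (cases "\<iota> s = s") (auto simp: orbit_def)
      with rest show ?thesis by (simp add: prod.subset_diff[OF orbit_T psubset.hyps(1)])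
    qed simp
  qed
  then show ?thesis using assms(1) into by blast
qed

lemma prod_plus_minus_one:
  fixes \<sigma> :: "'a \<Rightarrow> 'b::comm_ring_1"
  assumes "finite S" and "\<And>s. s \<in> S \<Longrightarrow> \<sigma> s = 1 \<or> \<sigma> s = -1"
  shows "prod \<sigma> S = 1 \<or> prod \<sigma> S = -1"
  using assms
proof (induction S rule: finite_induct)
  case (insert x F)
  then have "\<sigma> x = 1 \<or> \<sigma> x = -1" "prod \<sigma> F = 1 \<or> prod \<sigma> F = -1" by auto
  then show ?case using insert.hyps by auto
qed simp

lemma exists_signs_with_prod:
  fixes \<sigma> l :: "'a \<Rightarrow> 'b::comm_ring_1"
  assumes "finite S" and signs: "\<And>s. s \<in> S \<Longrightarrow> \<sigma> s = 1 \<or> \<sigma> s = -1" and e: "e = 1 \<or> e = -1"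
    and "prod \<sigma> S = e \<or> (\<exists>s\<in>S. l s = 0)"
  obtains \<sigma>' where "\<And>s. s \<in> S \<Longrightarrow> \<sigma>' s = 1 \<or> \<sigma>' s = -1" and "prod \<sigma>' S = e"
    and "\<And>s. s \<in> S \<Longrightarrow> \<sigma>' s * l s = \<sigma> s * l s"
proof (cases "prod \<sigma> S = e")
  case True
  then show ?thesis using signs by (intro that[of \<sigma>]) simp_all
next
  case False
  then obtain s0 where s0: "s0 \<in> S" "l s0 = 0" using assms(4) by blast
  define \<sigma>' where "\<sigma>' = \<sigma>(s0 := - \<sigma> s0)"
  have "prod \<sigma>' S = \<sigma>' s0 * prod \<sigma>' (S - {s0})" by (rule prod.remove[OF assms(1) s0(1)])
  also have "\<dots> = - (\<sigma> s0 * prod \<sigma> (S - {s0}))" by (simp add: \<sigma>'_def)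
  also have "\<dots> = - prod \<sigma> S" by (simp add: prod.remove[OF assms(1) s0(1)])
  finally have "prod \<sigma>' S = e"
    using prod_plus_minus_one[of S \<sigma>] assms(1) signs e False by auto
  moreover have "\<sigma>' s = 1 \<or> \<sigma>' s = -1" if "s \<in> S" for s
    using signs[OF that] signs[OF s0(1)] by (auto simp: \<sigma>'_def)
  ultimately show ?thesis using s0 by (intro that[of \<sigma>']) (auto simp: \<sigma>'_def)
qed

lemma reflected_product_peel_root:
  fixes m Q :: "'a::idom poly"
  assumes "m * (m \<circ>\<^sub>p [:0, -1:]) = [:- v, 1:] * [:v, 1:] * Q"
  obtains \<epsilon> m' where "\<epsilon> = 1 \<or> \<epsilon> = -1" and "m = [:- (\<epsilon> * v), 1:] * m'"
    and "m' * (m' \<circ>\<^sub>p [:0, -1:]) = - Q"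
proof -
  have "poly (m * (m \<circ>\<^sub>p [:0, -1:])) v = 0" unfolding assms by simp
  then have "poly m v = 0 \<or> poly m (- v) = 0" by (simp add: poly_pcompose)
  then obtain \<epsilon> where \<epsilon>: "\<epsilon> = 1 \<or> \<epsilon> = -1" and "poly m (\<epsilon> * v) = 0"
    by (metis mult_1 mult_minus1)
  then obtain m' where m': "m = [:- (\<epsilon> * v), 1:] * m'"
    by (metis dvdE poly_eq_0_iff_dvd)
  define P where "P = [:- v, 1:] * [:v, 1:]"
  have reflect: "[:- (\<epsilon> * v), 1:] \<circ>\<^sub>p [:0, -1:] = - [:\<epsilon> * v, 1:]"
    by (simp add: pcompose_pCons)
  have P_eq: "[:- (\<epsilon> * v), 1:] * [:\<epsilon> * v, 1:] = P" using \<epsilon> by (auto simp: P_def)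
  have rearrange: "X * Y * (- Z * W) = X * Z * - (Y * W)" for X Y Z W :: "'a poly"
    by (simp add: algebra_simps)
  have "P * - (m' * (m' \<circ>\<^sub>p [:0, -1:])) = P * Q"
    using assms unfolding m' pcompose_mult reflect rearrange P_eq P_def by simp
  moreover have "P \<noteq> 0" unfolding P_def by simp
  ultimately have "m' * (m' \<circ>\<^sub>p [:0, -1:]) = - Q" by (metis minus_minus mult_left_cancel)
  with \<epsilon> m' show ?thesis by (rule that)
qed

lemma factor_of_reflected_product:
  fixes m :: "'a::idom poly" and l :: "'b \<Rightarrow> 'a"
  assumes "finite S" and "c \<noteq> 0"
    and "m * (m \<circ>\<^sub>p [:0, -1:]) = Polynomial.smult c (\<Prod>s\<in>S. [:- l s, 1:] * [:l s, 1:])"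
  shows "\<exists>\<sigma> k. (\<forall>s\<in>S. \<sigma> s = 1 \<or> \<sigma> s = -1) \<and> m = Polynomial.smult k (\<Prod>s\<in>S. [:\<sigma> s * l s, 1:])"
  using assms
proof (induction S arbitrary: m c rule: finite_induct)
  case empty
  then have mm: "m * (m \<circ>\<^sub>p [:0, -1:]) = [:c:]" by simp
  then have "m \<noteq> 0" "m \<circ>\<^sub>p [:0, -1:] \<noteq> 0" using empty.prems(1) by auto
  then have "degree m + degree m = 0" using degree_mult_eq[of m "m \<circ>\<^sub>p [:0, -1:]"] mm
    by (simp add: degree_pcompose)
  then have "m = [:coeff m 0:]" by (simp add: degree_0_id)
  then show ?case by (intro exI[of _ "\<lambda>_. 1"] exI[of _ "coeff m 0"]) simp
next
  case (insert x F)
  have "m * (m \<circ>\<^sub>p [:0, -1:])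
      = [:- l x, 1:] * [:l x, 1:] * Polynomial.smult c (\<Prod>s\<in>F. [:- l s, 1:] * [:l s, 1:])"
    unfolding insert.prems(2) using insert.hyps by (simp add: mult_smult_right mult.assoc)
  then obtain \<epsilon> m' where \<epsilon>: "\<epsilon> = 1 \<or> \<epsilon> = -1" and m': "m = [:- (\<epsilon> * l x), 1:] * m'"
    and "m' * (m' \<circ>\<^sub>p [:0, -1:]) = Polynomial.smult (- c) (\<Prod>s\<in>F. [:- l s, 1:] * [:l s, 1:])"
    unfolding smult_minus_left by (rule reflected_product_peel_root)
  with insert.IH[of "- c" m'] insert.prems(1) obtain \<sigma> k
    where \<sigma>: "\<forall>s\<in>F. \<sigma> s = 1 \<or> \<sigma> s = -1" and k: "m' = Polynomial.smult k (\<Prod>s\<in>F. [:\<sigma> s * l s, 1:])"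
    by auto
  have "(\<Prod>s\<in>F. [:(\<sigma>(x := - \<epsilon>)) s * l s, 1:]) = (\<Prod>s\<in>F. [:\<sigma> s * l s, 1:])"
    using insert.hyps(2) by (intro prod.cong) auto
  then have "m = Polynomial.smult k (\<Prod>s\<in>insert x F. [:(\<sigma>(x := - \<epsilon>)) s * l s, 1:])"
    using insert.hyps by (simp add: m' k mult_smult_right)
  then show ?case using \<sigma> \<epsilon> by (intro exI[of _ "\<sigma>(x := - \<epsilon>)"] exI[of _ k]) auto
qed

definition refl_index :: "nat \<Rightarrow> nat \<Rightarrow> nat \<Rightarrow> nat" where
  "refl_index n \<rho> s = (if \<rho> = 1 \<and> s = 0 then 0 else n + \<rho> - 1 - s)"

lemma refl_index_less:
  assumes "s < n" and "\<rho> \<in> {0, 1}"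
  shows "refl_index n \<rho> s < n"
  using assms by (auto simp: refl_index_def)

lemma refl_index_refl_index:
  assumes "s < n" and "\<rho> \<in> {0, 1}"
  shows "refl_index n \<rho> (refl_index n \<rho> s) = s"
  using assms by (auto simp: refl_index_def)

lemma qang_refl_index:
  assumes "s < n" and "\<rho> \<in> {0, 1}"
  shows "qang n \<rho> (refl_index n \<rho> s) = - qang n \<rho> s \<or>
         qang n \<rho> (refl_index n \<rho> s) = 2 * pi - qang n \<rho> s"
proof (cases "\<rho> = 1 \<and> s = 0")
  case True
  then show ?thesis by (simp add: refl_index_def qang_def)
next
  case False
  then have "2 * real (refl_index n \<rho> s) + 1 - real \<rho> = 2 * real n - (2 * real s + 1 - real \<rho>)"
    using assms by (auto simp: refl_index_def of_nat_diff)
  then have "qang n \<rho> (refl_index n \<rho> s) = pi * (2 * real n - (2 * real s + 1 - real \<rho>)) / real n"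
    unfolding qang_def by simp
  also have "\<dots> = 2 * pi - qang n \<rho> s"
    unfolding qang_def using assms(1) by (simp add: field_simps)
  finally have "qang n \<rho> (refl_index n \<rho> s) = 2 * pi - qang n \<rho> s" .
  then show ?thesis ..
qed

lemma cos_qang_refl_index:
  assumes "s < n" and "\<rho> \<in> {0, 1}"
  shows "cos (qang n \<rho> (refl_index n \<rho> s)) = cos (qang n \<rho> s)"
  using qang_refl_index[OF assms] by (auto simp: cos_diff)

lemma sin_qang_refl_index:
  assumes "s < n" and "\<rho> \<in> {0, 1}"
  shows "sin (qang n \<rho> (refl_index n \<rho> s)) = - sin (qang n \<rho> s)"
  using qang_refl_index[OF assms] by (auto simp: sin_diff)

lemma cis_qang_refl_index:
  assumes "s < n" and "\<rho> \<in> {0, 1}"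
  shows "cis (qang n \<rho> (refl_index n \<rho> s)) = inverse (cis (qang n \<rho> s))"
  using cos_qang_refl_index[OF assms] sin_qang_refl_index[OF assms] by (simp add: complex_eq_iff)

lemma qang_refl_index_fixed:
  assumes "s < n" and "\<rho> \<in> {0, 1}" and "refl_index n \<rho> s = s"
  shows "qang n \<rho> s = 0 \<or> qang n \<rho> s = pi"
proof -
  have "sin (qang n \<rho> s) = 0" using sin_qang_refl_index[OF assms(1,2)] assms(3) by simp
  then show ?thesis using qang_bounds[OF assms(1,2)] sin_eq_0_0_2pi by blast
qed

lemma sD_qang_refl_index:
  assumes "s < n" and "\<rho> \<in> {0, 1}" and sD: "admissible_sqrtD a b c d \<kappa> sD"
  shows "sD (qang n \<rho> (refl_index n \<rho> s)) = sD (qang n \<rho> s)"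
proof (cases "sin (qang n \<rho> s) = 0")
  case True
  then have "qang n \<rho> s = 0 \<or> qang n \<rho> s = pi"
    using qang_bounds[OF assms(1,2)] sin_eq_0_0_2pi by blast
  then have "qang n \<rho> (refl_index n \<rho> s) = qang n \<rho> s"
    using qang_refl_index[OF assms(1,2)] qang_bounds[OF refl_index_less[OF assms(1,2)] assms(2)]
    by auto
  then show ?thesis by simp
next
  case False
  have "sD (2 * pi - qang n \<rho> s) = sD (- qang n \<rho> s)"
    using sD unfolding admissible_sqrtD_def by (metis add.commute diff_conv_add_uminus)
  moreover have "sD (- qang n \<rho> s) = sD (qang n \<rho> s)"
    using sD False unfolding admissible_sqrtD_def by blast
  ultimately show ?thesis using qang_refl_index[OF assms(1,2)] by auto
qed

lemma quadratic_root_factors: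
  fixes A B C S x :: complex
  assumes "A \<noteq> 0" and "S\<^sup>2 = A * C - B\<^sup>2"
  shows "A * x\<^sup>2 - C + 2 * \<i> * B * x = A * ((x - (S - \<i> * B) / A) * (x + (S + \<i> * B) / A))"
proof -
  have "C = (S\<^sup>2 + B\<^sup>2) / A" using assms by (simp add: field_simps)
  then show ?thesis using assms(1) by (simp add: field_simps power2_eq_square algebra_simps)
qed

lemma quadratic_roots_prod:
  fixes A B C S :: complex
  assumes "A \<noteq> 0" and "S\<^sup>2 = A * C - B\<^sup>2"
  shows "(S - \<i> * B) / A * ((S + \<i> * B) / A) = C / A"
proof -
  have "(S - \<i> * B) * (S + \<i> * B) = A * C" using assms(2) by (simp add: algebra_simps power2_eq_square)
  then show ?thesis using assms(1) by (simp add: field_simps power2_eq_square)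
qed

lemma lam_refl_index:
  assumes "s < n" and "\<rho> \<in> {0, 1}" and "admissible_sqrtD a b c d \<kappa> sD"
  shows "lam a b c d \<kappa> sD (qang n \<rho> (refl_index n \<rho> s))
    = (sD (qang n \<rho> s) + \<i> * Bfun a b c d \<kappa> (qang n \<rho> s)) / Afun a b c d \<kappa> (qang n \<rho> s)"
  using cos_qang_refl_index[OF assms(1,2)] sin_qang_refl_index[OF assms(1,2)]
    sD_qang_refl_index[OF assms]
  by (simp add: lam_def Afun_def Bfun_def)

lemma factor_eq_lam:
  assumes "s < n" and "\<rho> \<in> {0, 1}" and sD: "admissible_sqrtD a b c d \<kappa> sD"
    and A: "Afun a b c d \<kappa> (qang n \<rho> s) \<noteq> 0"
  shows "Afun a b c d \<kappa> (qang n \<rho> s) * x\<^sup>2 - Cfun a b c d \<kappa> (qang n \<rho> s)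
           + 2 * \<i> * Bfun a b c d \<kappa> (qang n \<rho> s) * x
         = Afun a b c d \<kappa> (qang n \<rho> s) * ((x - lam a b c d \<kappa> sD (qang n \<rho> s))
             * (x + lam a b c d \<kappa> sD (qang n \<rho> (refl_index n \<rho> s))))"
proof -
  have "(sD (qang n \<rho> s))\<^sup>2 = Afun a b c d \<kappa> (qang n \<rho> s) * Cfun a b c d \<kappa> (qang n \<rho> s)
      - (Bfun a b c d \<kappa> (qang n \<rho> s))\<^sup>2"
    using sD by (simp add: admissible_sqrtD_def Dfun_def)
  then show ?thesis
    unfolding lam_refl_index[OF assms(1-3)] unfolding lam_def by (rule quadratic_root_factors[OF A])
qed

lemma prod_factor_eq_lam:
  assumes "\<rho> \<in> {0, 1}" and sD: "admissible_sqrtD a b c d \<kappa> sD"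
    and A: "\<forall>s<n. Afun a b c d \<kappa> (qang n \<rho> s) \<noteq> 0"
  shows "(\<Prod>s<n. Afun a b c d \<kappa> (qang n \<rho> s) * x\<^sup>2 - Cfun a b c d \<kappa> (qang n \<rho> s)
                   + 2 * \<i> * Bfun a b c d \<kappa> (qang n \<rho> s) * x)
    = (\<Prod>s<n. Afun a b c d \<kappa> (qang n \<rho> s))
      * (\<Prod>s<n. (x - lam a b c d \<kappa> sD (qang n \<rho> s)) * (x + lam a b c d \<kappa> sD (qang n \<rho> s)))"
proof -
  let ?A = "\<lambda>s. Afun a b c d \<kappa> (qang n \<rho> s)"
  let ?l = "\<lambda>s. lam a b c d \<kappa> sD (qang n \<rho> s)"
  have "(\<Prod>s<n. ?A s * x\<^sup>2 - Cfun a b c d \<kappa> (qang n \<rho> s) + 2 * \<i> * Bfun a b c d \<kappa> (qang n \<rho> s) * x)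
      = (\<Prod>s<n. ?A s * ((x - ?l s) * (x + ?l (refl_index n \<rho> s))))"
    using factor_eq_lam[OF _ assms(1,2)] A by (intro prod.cong) auto
  also have "\<dots> = (\<Prod>s<n. ?A s) * ((\<Prod>s<n. x - ?l s) * (\<Prod>s<n. x + ?l (refl_index n \<rho> s)))"
    by (simp add: prod.distrib)
  also have "(\<Prod>s<n. x + ?l (refl_index n \<rho> s)) = (\<Prod>s<n. x + ?l s)"
    using assms(1) by (intro prod.reindex_bij_witness[of _ "refl_index n \<rho>" "refl_index n \<rho>"])
      (auto simp: refl_index_less refl_index_refl_index)
  finally show ?thesis by (simp add: prod.distrib)
qed

lemma cis_root_pair:
  assumes "\<kappa> \<noteq> 0"
  shows "(1 - cis q * (b * d / \<kappa>)) / (\<kappa> - cis q * (a * c))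
       * ((1 - inverse (cis q) * (b * d / \<kappa>)) / (\<kappa> - inverse (cis q) * (a * c)))
     = Cfun a b c d \<kappa> q / Afun a b c d \<kappa> q"
proof -
  have "(1 - cis q * (b * d / \<kappa>)) * (1 - inverse (cis q) * (b * d / \<kappa>)) = Cfun a b c d \<kappa> q"
    "(\<kappa> - cis q * (a * c)) * (\<kappa> - inverse (cis q) * (a * c)) = Afun a b c d \<kappa> q"
    unfolding Afun_def Cfun_def of_real_cos_cis using assms
    by (simp_all add: field_simps power2_eq_square)
  then show ?thesis by (metis times_divide_times_eq)
qed

lemma lam_zero_or_pi:
  assumes sD: "admissible_sqrtD a b c d \<kappa> sD" and q: "q = 0 \<or> q = pi"
    and A: "Afun a b c d \<kappa> q \<noteq> 0"
  shows "lam a b c d \<kappa> sD q = (1 - cis q * (b * d / \<kappa>)) / (\<kappa> - cis q * (a * c))"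
proof -
  obtain e :: complex where e: "cis q = e" "complex_of_real (cos q) = e" "e * e = 1"
    and B: "Bfun a b c d \<kappa> q = 0" and S: "sD q = (\<kappa> - e * (a * c)) * (1 - e * (b * d / \<kappa>))"
    using q sD by (auto simp: Bfun_def admissible_sqrtD_def)
  have A_eq: "Afun a b c d \<kappa> q = (\<kappa> - e * (a * c))\<^sup>2"
    using e by (simp add: Afun_def power2_eq_square algebra_simps)
  then have "\<kappa> - e * (a * c) \<noteq> 0" using A by auto
  then show ?thesis by (simp add: lam_def A_eq B S e(1) power2_eq_square)
qed

lemma prod_lam_qang:
  assumes n: "n \<ge> 1" and rho: "\<rho> \<in> {0, 1}" and \<kappa>: "\<kappa> \<noteq> 0"
    and sD: "admissible_sqrtD a b c d \<kappa> sD" and A: "\<forall>s<n. Afun a b c d \<kappa> (qang n \<rho> s) \<noteq> 0"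
  shows "(\<Prod>s<n. lam a b c d \<kappa> sD (qang n \<rho> s))
    = (1 + (-1) ^ \<rho> * (b * d / \<kappa>) ^ n) / (\<kappa> ^ n + (-1) ^ \<rho> * (a * c) ^ n)"
proof -
  define \<iota> where "\<iota> = refl_index n \<rho>"
  define l where "l s = lam a b c d \<kappa> sD (qang n \<rho> s)" for s
  define g where "g s = (1 - cis (qang n \<rho> s) * (b * d / \<kappa>)) / (\<kappa> - cis (qang n \<rho> s) * (a * c))" for s
  have "(\<Prod>s<n. l s) = (\<Prod>s<n. g s)"
  proof (rule prod_involution_eq[where \<iota> = \<iota>])
    fix s assume "s \<in> {..<n}" "\<iota> s \<noteq> s"
    then have s: "s < n" by simp
    have "(sD (qang n \<rho> s))\<^sup>2 = Afun a b c d \<kappa> (qang n \<rho> s) * Cfun a b c d \<kappa> (qang n \<rho> s)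
        - (Bfun a b c d \<kappa> (qang n \<rho> s))\<^sup>2"
      using sD by (simp add: admissible_sqrtD_def Dfun_def)
    from quadratic_roots_prod[OF A[rule_format, OF s] this]
    have "l s * l (\<iota> s) = Cfun a b c d \<kappa> (qang n \<rho> s) / Afun a b c d \<kappa> (qang n \<rho> s)"
      unfolding l_def \<iota>_def lam_refl_index[OF s rho sD] by (simp add: lam_def)
    also have "\<dots> = g s * g (\<iota> s)"
      unfolding g_def \<iota>_def cis_qang_refl_index[OF s rho] cis_root_pair[OF \<kappa>] ..
    finally show "l s * l (\<iota> s) = g s * g (\<iota> s)" .
  next
    fix s assume "s \<in> {..<n}" "\<iota> s = s"
    then have "qang n \<rho> s = 0 \<or> qang n \<rho> s = pi"
      using qang_refl_index_fixed[OF _ rho] by (simp add: \<iota>_def)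
    then show "l s = g s" using lam_zero_or_pi[OF sD] A \<open>s \<in> {..<n}\<close> by (simp add: l_def g_def)
  qed (use refl_index_less[OF _ rho] refl_index_refl_index[OF _ rho] in \<open>auto simp: \<iota>_def\<close>)
  also have "\<dots> = (1 + (-1) ^ \<rho> * (b * d / \<kappa>) ^ n) / (\<kappa> ^ n + (-1) ^ \<rho> * (a * c) ^ n)"
    unfolding g_def prod_dividef prod_sub_cis_qang[OF n rho] by simp
  finally show ?thesis by (simp add: l_def)
qed

lemma coeff_prod_monic_linear: "coeff (\<Prod>s<n. [:f s, 1:]) n = (1 :: 'a::idom)"
proof -
  have "degree (\<Prod>s<n. [:f s, 1:]) = n" by (subst degree_prod_sum_eq) auto
  moreover have "lead_coeff (\<Prod>s<n. [:f s, 1:]) = 1" by (simp add: lead_coeff_prod)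
  ultimately show ?thesis by simp
qed

lemma poly_eq_prod_signed_lam:
  fixes t :: "complex poly"
  assumes rho: "\<rho> \<in> {0, 1}" and sD: "admissible_sqrtD a b c d \<kappa> sD"
    and A: "\<forall>s<n. Afun a b c d \<kappa> (qang n \<rho> s) \<noteq> 0"
    and tt: "\<And>x. poly t x * poly t (- x) =
            (-1)^n * (\<Prod>s<n. Afun a b c d \<kappa> (qang n \<rho> s) * x^2 - Cfun a b c d \<kappa> (qang n \<rho> s)
                               + 2 * \<i> * Bfun a b c d \<kappa> (qang n \<rho> s) * x)"
  obtains \<sigma> where "\<forall>s\<in>{..<n}. \<sigma> s = 1 \<or> \<sigma> s = -1"
    and "\<And>x. poly t x = coeff t n * (\<Prod>s<n. x + \<sigma> s * lam a b c d \<kappa> sD (qang n \<rho> s))"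
proof -
  define l where "l s = lam a b c d \<kappa> sD (qang n \<rho> s)" for s
  define P where "P s = [:- l s, 1:] * [:l s, 1:]" for s
  have poly_P: "poly (P s) x = (x - l s) * (x + l s)" for s x by (simp add: P_def algebra_simps)
  have c: "(-1) ^ n * (\<Prod>s<n. Afun a b c d \<kappa> (qang n \<rho> s)) \<noteq> 0" using A by simp
  have "t * (t \<circ>\<^sub>p [:0, -1:])
      = Polynomial.smult ((-1) ^ n * (\<Prod>s<n. Afun a b c d \<kappa> (qang n \<rho> s))) (\<Prod>s<n. P s)"
    by (rule poly_ext)
      (simp add: poly_pcompose poly_prod poly_P tt prod_factor_eq_lam[OF rho sD A] l_def)
  then obtain \<sigma> k where \<sigma>: "\<forall>s\<in>{..<n}. \<sigma> s = 1 \<or> \<sigma> s = -1"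
    and t: "t = Polynomial.smult k (\<Prod>s<n. [:\<sigma> s * l s, 1:])"
    using factor_of_reflected_product[OF finite_lessThan c] unfolding P_def by blast
  have "coeff t n = k" by (simp add: t coeff_prod_monic_linear)
  then have "poly t x = coeff t n * (\<Prod>s<n. x + \<sigma> s * l s)" for x
    by (simp add: t poly_prod add.commute)
  with \<sigma> show ?thesis unfolding l_def by (rule that)
qed

lemma prod_signs_from_value_at_0:
  fixes t :: "complex poly" and \<sigma> :: "nat \<Rightarrow> complex"
  assumes n: "n \<ge> 1" and rho: "\<rho> \<in> {0, 1}" and \<kappa>: "\<kappa> \<noteq> 0"
    and sD: "admissible_sqrtD a b c d \<kappa> sD" and A: "\<forall>s<n. Afun a b c d \<kappa> (qang n \<rho> s) \<noteq> 0"
    and lead_nz: "a^n * c^n + (-1)^\<rho> * \<kappa>^n \<noteq> 0"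
    and t0: "poly t 0 = 1 + (-1)^\<rho> * b^n * d^n / \<kappa>^n"
    and t: "\<And>x. poly t x = (a^n * c^n + (-1)^\<rho> * \<kappa>^n)
                             * (\<Prod>s<n. x + \<sigma> s * lam a b c d \<kappa> sD (qang n \<rho> s))"
  shows "prod \<sigma> {..<n} = (-1) ^ \<rho> \<or> (\<exists>s\<in>{..<n}. lam a b c d \<kappa> sD (qang n \<rho> s) = 0)"
proof -
  define \<epsilon> :: complex where "\<epsilon> = (-1) ^ \<rho>"
  define N where "N = 1 + \<epsilon> * (b * d / \<kappa>) ^ n"
  define D where "D = \<kappa> ^ n + \<epsilon> * (a * c) ^ n"
  have \<epsilon>: "\<epsilon> * \<epsilon> = 1" by (simp add: \<epsilon>_def power_add[symmetric])
  have "\<epsilon> * D = \<epsilon> * \<kappa> ^ n + (\<epsilon> * \<epsilon>) * (a * c) ^ n" by (simp add: D_def algebra_simps)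
  then have lead: "a^n * c^n + (-1)^\<rho> * \<kappa>^n = \<epsilon> * D"
    using \<epsilon> by (simp add: \<epsilon>_def power_mult_distrib)
  then have "D \<noteq> 0" using lead_nz by auto
  note prod_lam = prod_lam_qang[OF n rho \<kappa> sD A, folded \<epsilon>_def, folded N_def D_def]
  have "N = poly t 0" using t0 by (simp add: N_def \<epsilon>_def power_mult_distrib power_divide)
  also have "\<dots> = \<epsilon> * D * prod \<sigma> {..<n} * (N / D)"
    unfolding t lead by (simp add: prod.distrib prod_lam)
  also have "\<dots> = \<epsilon> * prod \<sigma> {..<n} * N" using \<open>D \<noteq> 0\<close> by simp
  finally have N_eq: "N = \<epsilon> * prod \<sigma> {..<n} * N" .
  show ?thesis
  proof (cases "N = 0")
    case True
    then show ?thesis using prod_lam by simp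
  next
    case False
    then have "\<epsilon> * prod \<sigma> {..<n} = 1" using N_eq by simp
    then have "prod \<sigma> {..<n} = \<epsilon>" using \<epsilon> by (metis mult.assoc mult_1 mult_1_right)
    then show ?thesis unfolding \<epsilon>_def ..
  qed
qed

lemma factorization_with_signs:
  fixes t :: "complex poly"
  assumes n: "n \<ge> 1" and rho: "\<rho> \<in> {0, 1}" and \<kappa>: "\<kappa> \<noteq> 0"
    and lead_nz: "a^n * c^n + (-1)^\<rho> * \<kappa>^n \<noteq> 0"
    and t0: "poly t 0 = 1 + (-1)^\<rho> * b^n * d^n / \<kappa>^n"
    and tlead: "coeff t n = a^n * c^n + (-1)^\<rho> * \<kappa>^n"
    and tt: "\<And>x. poly t x * poly t (- x) =
            (-1)^n * (\<Prod>s<n. Afun a b c d \<kappa> (qang n \<rho> s) * x^2 - Cfun a b c d \<kappa> (qang n \<rho> s)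
                               + 2 * \<i> * Bfun a b c d \<kappa> (qang n \<rho> s) * x)"
    and sD: "admissible_sqrtD a b c d \<kappa> sD"
    and A: "\<forall>s<n. Afun a b c d \<kappa> (qang n \<rho> s) \<noteq> 0"
  shows "\<exists>\<sigma> :: nat \<Rightarrow> complex. (\<forall>s<n. \<sigma> s = 1 \<or> \<sigma> s = -1) \<and>
              (\<Prod>s<n. \<sigma> s) = (-1)^\<rho> \<and>
              (\<forall>x. poly t x = (a^n * c^n + (-1)^\<rho> * \<kappa>^n) *
                     (\<Prod>s<n. x + \<sigma> s * lam a b c d \<kappa> sD (qang n \<rho> s)))"
proof -
  define l where "l s = lam a b c d \<kappa> sD (qang n \<rho> s)" for s
  obtain \<sigma> where \<sigma>: "\<forall>s\<in>{..<n}. \<sigma> s = 1 \<or> \<sigma> s = -1"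
    and t: "\<And>x. poly t x = (a^n * c^n + (-1)^\<rho> * \<kappa>^n) * (\<Prod>s<n. x + \<sigma> s * l s)"
    using poly_eq_prod_signed_lam[OF rho sD A tt] unfolding tlead l_def by blast
  have sign: "(-1 :: complex) ^ \<rho> = 1 \<or> (-1 :: complex) ^ \<rho> = -1" using rho by auto
  have "prod \<sigma> {..<n} = (-1) ^ \<rho> \<or> (\<exists>s\<in>{..<n}. l s = 0)"
    using prod_signs_from_value_at_0[OF n rho \<kappa> sD A lead_nz t0 t[unfolded l_def]] by (simp add: l_def)
  then obtain \<sigma>' where signs: "\<And>s. s \<in> {..<n} \<Longrightarrow> \<sigma>' s = 1 \<or> \<sigma>' s = -1"
    and prod_signs: "prod \<sigma>' {..<n} = (-1) ^ \<rho>"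
    and same: "\<And>s. s \<in> {..<n} \<Longrightarrow> \<sigma>' s * l s = \<sigma> s * l s"
    using exists_signs_with_prod[OF finite_lessThan _ sign] \<sigma> by blast
  have "poly t x = (a^n * c^n + (-1)^\<rho> * \<kappa>^n) * (\<Prod>s<n. x + \<sigma>' s * l s)" for x
    unfolding t by (intro arg_cong[where f = "(*) _"] prod.cong) (simp_all add: same)
  then show ?thesis using signs prod_signs unfolding l_def by (intro exI[of _ \<sigma>']) blast
qed

theorem mainTheorem8:
  fixes a b c d \<kappa> :: complex and n \<rho> :: nat and t :: "complex poly"
    and sD :: "real \<Rightarrow> complex"
  assumes n: "n \<ge> 1" and rho: "\<rho> \<in> {0, 1}"
    and nz: "a \<noteq> 0" "b \<noteq> 0" "c \<noteq> 0" "d \<noteq> 0" "\<kappa> \<noteq> 0"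
    and lead_nz: "a^n * c^n + (-1)^\<rho> * \<kappa>^n \<noteq> 0"
    and deg: "degree t \<le> n"
    and t0: "poly t 0 = 1 + (-1)^\<rho> * b^n * d^n / \<kappa>^n"
    and tlead: "coeff t n = a^n * c^n + (-1)^\<rho> * \<kappa>^n"
    and tt: "\<And>x. poly t x * poly t (- x) =
               (-1)^\<rho> * (zfun a b c d \<kappa> n x + zfun a b c d \<kappa> n (- x))
               + mat_trace ((Lmat a b c d \<kappa> (x^2)) ^\<^sub>m n)"
    and sD: "admissible_sqrtD a b c d \<kappa> sD"
  shows "(\<forall>x. poly t x * poly t (- x) =
            (-1)^n * (\<Prod>s<n. Afun a b c d \<kappa> (qang n \<rho> s) * x^2 - Cfun a b c d \<kappa> (qang n \<rho> s)
                               + 2 * \<i> * Bfun a b c d \<kappa> (qang n \<rho> s) * x))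
       \<and> ((\<forall>s<n. Afun a b c d \<kappa> (qang n \<rho> s) \<noteq> 0) \<longrightarrow>
           (\<exists>\<sigma> :: nat \<Rightarrow> complex. (\<forall>s<n. \<sigma> s = 1 \<or> \<sigma> s = -1) \<and>
              (\<Prod>s<n. \<sigma> s) = (-1)^\<rho> \<and>
              (\<forall>x. poly t x = (a^n * c^n + (-1)^\<rho> * \<kappa>^n) *
                     (\<Prod>s<n. x + \<sigma> s * lam a b c d \<kappa> sD (qang n \<rho> s)))))"
proof -
  have product: "\<forall>x. poly t x * poly t (- x) =
      (-1)^n * (\<Prod>s<n. Afun a b c d \<kappa> (qang n \<rho> s) * x^2 - Cfun a b c d \<kappa> (qang n \<rho> s)
                         + 2 * \<i> * Bfun a b c d \<kappa> (qang n \<rho> s) * x)"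
    using tt z_sum_plus_trace_eq_prod[OF n rho nz(5)] by simp
  then show ?thesis
    using factorization_with_signs[OF n rho nz(5) lead_nz t0 tlead _ sD] by blast
qed

end
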